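(* Let $G$ be a second countable locally compact Hausdorff groupoid with a fixed left Haar system $\lambda=\{\lambda^u\}_{u\in G^0}$, and let $(\Phi,\Psi)$ be a complementary pair of $N$-functions both satisfying the $\Delta_2$-condition. Then $\check A_\Phi(G)$ is a left and right $C_0(G^0)$-module under the actions $(bh)(x)=b(d(x))h(x)$ and $(hb)(x)=h(x)b(r(x))$ for $b\in C_0(G^0)$, $h\in\check A_\Phi(G)$; that is, $bh,hb\in\check A_\Phi(G)$ for all such $b,h$.
   Context: $G^0$ is the unit space, $r(x)=xx^{-1}$, $d(x)=x^{-1}x$, $G^u=r^{-1}(u)$; the left Haar system consists of positive Radon measures $\lambda^u$ with support $G^u$, $u\mapsto\int f d\lambda^u$ continuous for $f\in C_c(G)$, and $\int f(xy)d\lambda^{d(x)}(y)=\int f(y)d\lambda^{r(x)}(y)$. An $N$-function is a continuous even convex $\Phi:\mathbb R\to[0,\infty)$ with $\Phi(x)=0$ iff $x=0$, $\Phi(x)/x\to0$ as $x\to0$, $\to\infty$ as $x\to\infty$; complementary function $\Psi(y)=\sup_{x\ge0}(x|y|-\Phi(x))$. $\Delta_2$: there is $k>0$ with $\Phi(2x)\le k\Phi(x)$ for all $x\ge0$ ($G$ non-compact), resp. for $x\ge x_0$, some $x_0>0$ ($G$ compact). For $u\in G^0$, $L^\Phi(G^u)$ is the space of measurable $f$ on $G^u$ with $\int\Phi(\alpha|f|)d\lambda^u<\infty$ for some $\alpha>0$, gauge norm $\|f\|^0_\Phi=\inf\{k>0:\int\Phi(|f|/k)d\lambda^u\le1\}$;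 similarly for $\Psi$. For $f\in C_c(G)$, $f^u=f|_{G^u}$ and $\check f(x)=f(x^{-1})$. $E_0^\Phi$ (resp. $E_0^\Psi$) is the Banach space of sections $\xi=(\xi^u)$ with $\xi^u\in L^\Phi(G^u)$ (resp. $L^\Psi(G^u)$), locally close to $C_c(G)$ in the gauge norm, with $u\mapsto\|\xi^u\|^0$ vanishing at infinity, normed by $\sup_u\|\xi^u\|^0$. $\mathcal K(G)$ is the collection of compact subsets of $G$ with nonempty interior intersecting $G^0$. For $P\in\mathcal K(G)$, $E_0^\Phi(P)$ (resp. $E_0^\Psi(P)$) is the closure in $E_0^\Phi$ (resp. $E_0^\Psi$) of $\{f\in C_c(G):\operatorname{supp}f\subseteq P\}$. For $g\in E_0^\Psi(P)$, $f\in E_0^\Phi(P)$, $(g*\check f)(x)=\int_{G^{r(x)}}g^{r(x)}(y)f^{d(x)}(x^{-1}y)d\lambda^{r(x)}(y)$. $\check A_{\Phi,P}(G)$ is the set of $h\in C_c(G)$ of the form $h=\sum_{n=1}^\infty g_n*\check f_n$ with $f_n\in E_0^\Phi(P)$, $g_n\in E_0^\Psi(P)$ and $\sum_n\|f_n\|^0_\Phi\|g_n\|^0_\Psi<\infty$, and $\check A_\Phi(G)=\bigcup_{P\in\mathcal K(G)}\check A_{\Phi,P}(G)$. *)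

theory Defs
  imports "HOL-Analysis.Analysis" "HOL-Probability.Probability"
begin

definition groupoid :: "('g \<times> 'g) set \<Rightarrow> ('g \<Rightarrow> 'g \<Rightarrow> 'g) \<Rightarrow> ('g \<Rightarrow> 'g) \<Rightarrow> bool" where
  "groupoid G2 gmul ginv \<longleftrightarrow>
     (\<forall>x y z. (x, y) \<in> G2 \<and> (y, z) \<in> G2 \<longrightarrow>
         (gmul x y, z) \<in> G2 \<and> (x, gmul y z) \<in> G2 \<and> gmul (gmul x y) z = gmul x (gmul y z)) \<and>
     (\<forall>x. ginv (ginv x) = x) \<and>
     (\<forall>x. (ginv x, x) \<in> G2) \<and>
     (\<forall>x z. (z, x) \<in> G2 \<longrightarrow> gmul (gmul z x) (ginv x) = z) \<and>
     (\<forall>x y. (x, y) \<in> G2 \<longrightarrow> gmul (ginv x) (gmul x y) = y)"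

definition topological_groupoid ::
  "('g::topological_space \<times> 'g) set \<Rightarrow> ('g \<Rightarrow> 'g \<Rightarrow> 'g) \<Rightarrow> ('g \<Rightarrow> 'g) \<Rightarrow> bool" where
  "topological_groupoid G2 gmul ginv \<longleftrightarrow>
     groupoid G2 gmul ginv \<and>
     continuous_on G2 (\<lambda>p. gmul (fst p) (snd p)) \<and> continuous_on UNIV ginv"

definition gr :: "('g \<Rightarrow> 'g \<Rightarrow> 'g) \<Rightarrow> ('g \<Rightarrow> 'g) \<Rightarrow> 'g \<Rightarrow> 'g" where
  "gr gmul ginv x = gmul x (ginv x)"

definition gd :: "('g \<Rightarrow> 'g \<Rightarrow> 'g) \<Rightarrow> ('g \<Rightarrow> 'g) \<Rightarrow> 'g \<Rightarrow> 'g" where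
  "gd gmul ginv x = gmul (ginv x) x"

definition unit_space :: "('g \<Rightarrow> 'g \<Rightarrow> 'g) \<Rightarrow> ('g \<Rightarrow> 'g) \<Rightarrow> 'g set" where
  "unit_space gmul ginv = range (gr gmul ginv)"

definition fsupp :: "('a::topological_space \<Rightarrow> complex) \<Rightarrow> 'a set" where
  "fsupp f = closure {x. f x \<noteq> 0}"

definition Cc :: "('a::topological_space \<Rightarrow> complex) set" where
  "Cc = {f. continuous_on UNIV f \<and> compact (fsupp f)}"

text \<open>C_0(G^0): continuous on G^0, vanishing at infinity on G^0 (values off G^0 irrelevant).\<close>
definition C0_on :: "'a::topological_space set \<Rightarrow> ('a \<Rightarrow> complex) set" where
  "C0_on S = {b. continuous_on S b \<and> (\<forall>e>0. compact {u\<in>S. norm (b u) \<ge> e})}"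

definition measure_support :: "'a::topological_space measure \<Rightarrow> 'a set" where
  "measure_support M = UNIV - \<Union>{U. open U \<and> emeasure M U = 0}"

definition radon_measure :: "'a::topological_space measure \<Rightarrow> bool" where
  "radon_measure M \<longleftrightarrow>
     sets M = sets borel \<and>
     (\<forall>K. compact K \<longrightarrow> emeasure M K < \<infinity>) \<and>
     (\<forall>B \<in> sets borel. emeasure M B = (INF U\<in>{U. open U \<and> B \<subseteq> U}. emeasure M U)) \<and>
     (\<forall>U. open U \<longrightarrow> emeasure M U = (SUP K\<in>{K. compact K \<and> K \<subseteq> U}. emeasure M K))"

definition left_haar_system ::
  "('g::topological_space \<Rightarrow> 'g \<Rightarrow> 'g) \<Rightarrow> ('g \<Rightarrow> 'g) \<Rightarrow> ('g \<Rightarrow> 'g measure) \<Rightarrow> bool" where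
  "left_haar_system gmul ginv lam \<longleftrightarrow>
     (\<forall>u\<in>unit_space gmul ginv. radon_measure (lam u) \<and>
        measure_support (lam u) = {x. gr gmul ginv x = u}) \<and>
     (\<forall>f\<in>Cc. continuous_on (unit_space gmul ginv) (\<lambda>u. \<integral>y. f y \<partial>lam u)) \<and>
     (\<forall>f\<in>Cc. \<forall>x.
        (\<integral>y. (if gr gmul ginv y = gd gmul ginv x then f (gmul x y) else 0) \<partial>lam (gd gmul ginv x))
        = (\<integral>y. f y \<partial>lam (gr gmul ginv x)))"

definition N_function :: "(real \<Rightarrow> real) \<Rightarrow> bool" where
  "N_function \<Phi> \<longleftrightarrow>
     continuous_on UNIV \<Phi> \<and> (\<forall>x. \<Phi> (-x) = \<Phi> x) \<and> convex_on UNIV \<Phi> \<and>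
     (\<forall>x. \<Phi> x \<ge> 0) \<and> (\<forall>x. \<Phi> x = 0 \<longleftrightarrow> x = 0) \<and>
     ((\<lambda>x. \<Phi> x / x) \<longlongrightarrow> 0) (at 0) \<and>
     filterlim (\<lambda>x. \<Phi> x / x) at_top at_top"

definition complementary :: "(real \<Rightarrow> real) \<Rightarrow> (real \<Rightarrow> real)" where
  "complementary \<Phi> = (\<lambda>y. SUP x\<in>{0..}. x * \<bar>y\<bar> - \<Phi> x)"

definition delta2 :: "bool \<Rightarrow> (real \<Rightarrow> real) \<Rightarrow> bool" where
  "delta2 G_compact \<Phi> \<longleftrightarrow>
     (if G_compact then (\<exists>k>0. \<exists>x0>0. \<forall>x\<ge>x0. \<Phi> (2 * x) \<le> k * \<Phi> x)
      else (\<exists>k>0. \<forall>x\<ge>0. \<Phi> (2 * x) \<le> k * \<Phi> x))"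

text \<open>A function on G^u is represented by a function on 'g whose values off G^u are ignored.\<close>
definition restr :: "('g \<Rightarrow> 'g \<Rightarrow> 'g) \<Rightarrow> ('g \<Rightarrow> 'g) \<Rightarrow> 'g \<Rightarrow> ('g \<Rightarrow> complex) \<Rightarrow> 'g \<Rightarrow> complex" where
  "restr gmul ginv u f = (\<lambda>y. if gr gmul ginv y = u then f y else 0)"

definition in_orlicz ::
  "('g \<Rightarrow> 'g \<Rightarrow> 'g) \<Rightarrow> ('g \<Rightarrow> 'g) \<Rightarrow> ('g \<Rightarrow> 'g measure) \<Rightarrow> (real \<Rightarrow> real) \<Rightarrow> 'g
     \<Rightarrow> ('g \<Rightarrow> complex) \<Rightarrow> bool" where
  "in_orlicz gmul ginv lam \<Phi> u f \<longleftrightarrow>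
     restr gmul ginv u f \<in> borel_measurable (lam u) \<and>
     (\<exists>\<alpha>>0. (\<integral>\<^sup>+y. ennreal (\<Phi> (\<alpha> * norm (restr gmul ginv u f y))) \<partial>lam u) < \<infinity>)"

definition gauge_norm ::
  "('g \<Rightarrow> 'g \<Rightarrow> 'g) \<Rightarrow> ('g \<Rightarrow> 'g) \<Rightarrow> ('g \<Rightarrow> 'g measure) \<Rightarrow> (real \<Rightarrow> real) \<Rightarrow> 'g
     \<Rightarrow> ('g \<Rightarrow> complex) \<Rightarrow> real" where
  "gauge_norm gmul ginv lam \<Phi> u f =
     Inf {k. 0 < k \<and> (\<integral>\<^sup>+y. ennreal (\<Phi> (norm (restr gmul ginv u f y) / k)) \<partial>lam u) \<le> 1}"

text \<open>Sections xi = (xi^u) are represented as xi :: 'g => 'g => complex, xi u being xi^u.\<close>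

definition E0 ::
  "('g::topological_space \<Rightarrow> 'g \<Rightarrow> 'g) \<Rightarrow> ('g \<Rightarrow> 'g) \<Rightarrow> ('g \<Rightarrow> 'g measure) \<Rightarrow> (real \<Rightarrow> real)
     \<Rightarrow> ('g \<Rightarrow> 'g \<Rightarrow> complex) set" where
  "E0 gmul ginv lam \<Phi> = {\<xi>.
     (\<forall>u\<in>unit_space gmul ginv. in_orlicz gmul ginv lam \<Phi> u (\<xi> u)) \<and>
     (\<forall>u0\<in>unit_space gmul ginv. \<forall>e>0. \<exists>f\<in>Cc. \<exists>U. open U \<and> u0 \<in> U \<and>
        (\<forall>u\<in>U \<inter> unit_space gmul ginv. gauge_norm gmul ginv lam \<Phi> u (\<lambda>y. \<xi> u y - f y) < e)) \<and>
     (\<forall>e>0. compact {u\<in>unit_space gmul ginv. gauge_norm gmul ginv lam \<Phi> u (\<xi> u) \<ge> e})}"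

definition E0_norm ::
  "('g \<Rightarrow> 'g \<Rightarrow> 'g) \<Rightarrow> ('g \<Rightarrow> 'g) \<Rightarrow> ('g \<Rightarrow> 'g measure) \<Rightarrow> (real \<Rightarrow> real)
     \<Rightarrow> ('g \<Rightarrow> 'g \<Rightarrow> complex) \<Rightarrow> real" where
  "E0_norm gmul ginv lam \<Phi> \<xi> = (SUP u\<in>unit_space gmul ginv. gauge_norm gmul ginv lam \<Phi> u (\<xi> u))"

text \<open>E_0(P): closure in E_0 of the C_c functions supported in P (viewed as sections u |-> f|G^u).\<close>
definition E0P ::
  "('g::topological_space \<Rightarrow> 'g \<Rightarrow> 'g) \<Rightarrow> ('g \<Rightarrow> 'g) \<Rightarrow> ('g \<Rightarrow> 'g measure) \<Rightarrow> (real \<Rightarrow> real)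
     \<Rightarrow> 'g set \<Rightarrow> ('g \<Rightarrow> 'g \<Rightarrow> complex) set" where
  "E0P gmul ginv lam \<Phi> P = {\<xi> \<in> E0 gmul ginv lam \<Phi>.
     \<forall>e>0. \<exists>f\<in>Cc. fsupp f \<subseteq> P \<and> E0_norm gmul ginv lam \<Phi> (\<lambda>u y. \<xi> u y - f y) < e}"

definition conv_check ::
  "('g \<Rightarrow> 'g \<Rightarrow> 'g) \<Rightarrow> ('g \<Rightarrow> 'g) \<Rightarrow> ('g \<Rightarrow> 'g measure)
     \<Rightarrow> ('g \<Rightarrow> 'g \<Rightarrow> complex) \<Rightarrow> ('g \<Rightarrow> 'g \<Rightarrow> complex) \<Rightarrow> 'g \<Rightarrow> complex" where
  "conv_check gmul ginv lam g f x =
     (\<integral>y. (if gr gmul ginv y = gr gmul ginv x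
            then g (gr gmul ginv x) y * f (gd gmul ginv x) (gmul (ginv x) y) else 0)
       \<partial>lam (gr gmul ginv x))"

definition K_sets :: "('g::topological_space \<Rightarrow> 'g \<Rightarrow> 'g) \<Rightarrow> ('g \<Rightarrow> 'g) \<Rightarrow> 'g set set" where
  "K_sets gmul ginv = {P. compact P \<and> interior P \<inter> unit_space gmul ginv \<noteq> {}}"

definition A_check_P ::
  "('g::topological_space \<Rightarrow> 'g \<Rightarrow> 'g) \<Rightarrow> ('g \<Rightarrow> 'g) \<Rightarrow> ('g \<Rightarrow> 'g measure) \<Rightarrow> (real \<Rightarrow> real)
     \<Rightarrow> 'g set \<Rightarrow> ('g \<Rightarrow> complex) set" where
  "A_check_P gmul ginv lam \<Phi> P = {h \<in> Cc. \<exists>fs gs.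
     (\<forall>n. fs n \<in> E0P gmul ginv lam \<Phi> P \<and> gs n \<in> E0P gmul ginv lam (complementary \<Phi>) P) \<and>
     summable (\<lambda>n. E0_norm gmul ginv lam \<Phi> (fs n) * E0_norm gmul ginv lam (complementary \<Phi>) (gs n)) \<and>
     (\<forall>x. (\<lambda>n. conv_check gmul ginv lam (gs n) (fs n) x) sums h x)}"

definition A_check ::
  "('g::topological_space \<Rightarrow> 'g \<Rightarrow> 'g) \<Rightarrow> ('g \<Rightarrow> 'g) \<Rightarrow> ('g \<Rightarrow> 'g measure) \<Rightarrow> (real \<Rightarrow> real)
     \<Rightarrow> ('g \<Rightarrow> complex) set" where
  "A_check gmul ginv lam \<Phi> = (\<Union>P\<in>K_sets gmul ginv. A_check_P gmul ginv lam \<Phi> P)"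

end

theory Submission
  imports Defs
begin

text \<open>Write \<open>h = \<Sum>\<^sub>n g\<^sub>n * f\<^sub>n\<^sup>\<or>\<close>. Scaling a section fibrewise, \<open>(b \<xi>)\<^sup>u = b(u) \<xi>\<^sup>u\<close>,
  passes through the convolution: \<open>g * (b f)\<^sup>\<or> = (b \<circ> d) (g * f\<^sup>\<or>)\<close> and
  \<open>(b g) * f\<^sup>\<or> = (b \<circ> r) (g * f\<^sup>\<or>)\<close>. So both actions reduce to the fact that multiplication by a
  bounded continuous \<open>b\<close> on \<open>G\<^sup>0\<close> maps \<open>E\<^sub>0(P)\<close> into itself with norm at most \<open>sup |b|\<close>.
  The gauge norm is homogeneous, so the fibre norms of \<open>b \<xi>\<close> are \<open>|b(u)| \<parallel>\<xi>\<^sup>u\<parallel>\<close>; these still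
  vanish at infinity because the fibre norms of \<open>\<xi>\<close> have compact superlevel sets and \<open>|b|\<close> is
  continuous and bounded. Approximants \<open>f \<in> C\<^sub>c(G)\<close> of \<open>\<xi>\<close> turn into approximants \<open>(b \<circ> r) f\<close>
  of \<open>b \<xi>\<close>, since \<open>b(u) = b(r y)\<close> on \<open>G\<^sup>u\<close>.\<close>

lemma le_mult_cInf:
  fixes A :: "real set"
  assumes "A \<noteq> {}" and "0 \<le> c" and "\<And>k. k \<in> A \<Longrightarrow> x \<le> c * k"
  shows "x \<le> c * Inf A"
proof (cases "c = 0")
  case False
  then have "x / c \<le> Inf A"
    using assms by (intro cInf_greatest) (auto simp: divide_le_eq mult.commute)
  then show ?thesis using assms(2) False by (simp add: divide_le_eq mult.commute)
qed (use assms in auto)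

lemma le_cInf_add_cInf:
  fixes A B :: "real set"
  assumes "A \<noteq> {}" and "B \<noteq> {}" and "\<And>a b. a \<in> A \<Longrightarrow> b \<in> B \<Longrightarrow> x \<le> a + b"
  shows "x \<le> Inf A + Inf B"
proof -
  have "x - b \<le> Inf A" if "b \<in> B" for b
    using assms that by (intro cInf_greatest) (auto simp: diff_le_eq)
  then have "x - Inf A \<le> Inf B"
    using assms(2) by (intro cInf_greatest) (auto simp: algebra_simps)
  then show ?thesis by simp
qed

lemma le_mult_if_le_mult_greater:
  fixes c e x :: real
  assumes "\<And>t. x < t \<Longrightarrow> e \<le> c * t"
  shows "e \<le> c * x"
proof -
  have "\<forall>\<^sub>F t in at_right x. e \<le> c * t"
    using eventually_at_right_less by (rule eventually_mono) (rule assms)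
  then show ?thesis
    by (intro tendsto_lowerbound[of "\<lambda>t. c * t"] tendsto_intros) auto
qed

lemma summable_dominated_products:
  fixes a a' c :: "nat \<Rightarrow> real"
  assumes "summable (\<lambda>n. a n * c n)" and "\<And>n. 0 \<le> a' n" and "\<And>n. a' n \<le> M * a n"
    and "\<And>n. 0 \<le> c n"
  shows "summable (\<lambda>n. a' n * c n)"
proof (rule summable_comparison_test[OF _ summable_mult[OF assms(1), of M]])
  have "norm (a' n * c n) \<le> M * (a n * c n)" for n
    using mult_right_mono[OF assms(3) assms(4)] assms(2,4) by (simp add: abs_mult mult.assoc)
  then show "\<exists>N. \<forall>n\<ge>N. norm (a' n * c n) \<le> M * (a n * c n)" by blast
qed

lemma compact_superlevel_mult:
  fixes c g :: "'a::t2_space \<Rightarrow> real"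
  assumes c: "continuous_on S c" and "0 < M" and c_bounds: "\<And>u. u \<in> S \<Longrightarrow> 0 \<le> c u \<and> c u \<le> M"
    and g_nonneg: "\<And>u. u \<in> S \<Longrightarrow> 0 \<le> g u"
    and g_superlevel: "\<And>t. 0 < t \<Longrightarrow> compact {u\<in>S. t \<le> g u}"
    and "0 < e"
  shows "compact {u\<in>S. e \<le> c u * g u}"
proof -
  define K where "K = {u\<in>S. e / M \<le> g u}"
  have "compact K" unfolding K_def using \<open>0 < e\<close> \<open>0 < M\<close> by (intro g_superlevel) simp
  have "K \<subseteq> S" by (auto simp: K_def)
  \<comment> \<open>\<open>g\<close> need not be continuous: cut the set out of \<open>K\<close> by the closed superlevel sets of \<open>g\<close>\<close>
  have level_set: "{u\<in>S. e \<le> c u * g u} = (\<Inter>t\<in>{0<..}. {u\<in>K. t \<le> g u} \<union> {u\<in>K. e \<le> c u * t})"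
  proof (intro equalityI subsetI)
    fix u assume u: "u \<in> {u\<in>S. e \<le> c u * g u}"
    then have "e \<le> M * g u"
      using c_bounds g_nonneg by (smt (verit) mem_Collect_eq mult_right_mono)
    then have "u \<in> K" using u \<open>0 < M\<close> by (simp add: K_def divide_le_eq mult.commute)
    moreover have "e \<le> c u * t" if "g u < t" for t
      using u c_bounds[of u] that by (smt (verit) mem_Collect_eq mult_left_mono)
    ultimately show "u \<in> (\<Inter>t\<in>{0<..}. {u\<in>K. t \<le> g u} \<union> {u\<in>K. e \<le> c u * t})"
      by force
  next
    fix u assume "u \<in> (\<Inter>t\<in>{0<..}. {u\<in>K. t \<le> g u} \<union> {u\<in>K. e \<le> c u * t})"
    then have u: "u \<in> K \<and> (t \<le> g u \<or> e \<le> c u * t)" if "0 < t" for t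
      using that by blast
    then have "u \<in> S" using \<open>K \<subseteq> S\<close> zero_less_one by blast
    have "e \<le> c u * t" if "g u < t" for t
      using u[of t] that g_nonneg[OF \<open>u \<in> S\<close>] by linarith
    then have "e \<le> c u * g u" by (rule le_mult_if_le_mult_greater)
    then show "u \<in> {u\<in>S. e \<le> c u * g u}" using \<open>u \<in> S\<close> by simp
  qed
  have "closedin (top_of_set K) ({u\<in>K. t \<le> g u} \<union> {u\<in>K. e \<le> c u * t})" if "0 < t" for t
  proof (rule closedin_Un)
    have "{u\<in>K. t \<le> g u} = K \<inter> {u\<in>S. t \<le> g u}" using \<open>K \<subseteq> S\<close> by auto
    then show "closedin (top_of_set K) {u\<in>K. t \<le> g u}"
      using g_superlevel[OF that] by (simp add: closedin_closed_Int compact_imp_closed)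
    have "closed {x. e \<le> x * t}" by (intro closed_Collect_le continuous_intros)
    from continuous_closedin_preimage[OF continuous_on_subset[OF c \<open>K \<subseteq> S\<close>] this]
    show "closedin (top_of_set K) {u\<in>K. e \<le> c u * t}"
      by (simp add: vimage_def Int_def)
  qed
  then have "closedin (top_of_set K) {u\<in>S. e \<le> c u * g u}"
    unfolding level_set by (intro closedin_INT) auto
  then show ?thesis by (rule closedin_compact[OF \<open>compact K\<close>])
qed

lemma bounded_above_if_compact_superlevels:
  fixes g :: "'a::t2_space \<Rightarrow> real"
  assumes superlevel: "\<And>t. 0 < t \<Longrightarrow> compact {u\<in>S. t \<le> g u}"
  shows "\<exists>B. \<forall>u\<in>S. g u \<le> B"
proof (rule ccontr)
  define K where "K n = {u\<in>S. real n + 1 \<le> g u}" for n :: nat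
  assume "\<nexists>B. \<forall>u\<in>S. g u \<le> B"
  then have "\<exists>u\<in>S. real n + 1 \<le> g u" for n by (meson linorder_not_le less_imp_le)
  then have nonempty: "K n \<noteq> {}" for n by (auto simp: K_def)
  have decreasing: "K n \<subseteq> K m" if "m \<le> n" for m n using that by (auto simp: K_def)
  have "K 0 \<inter> (\<Inter>n\<in>I. K n) \<noteq> {}" if "finite I" for I
  proof -
    have "K (Max (insert 0 I)) \<subseteq> K n" if "n \<in> insert 0 I" for n
      using \<open>finite I\<close> that by (intro decreasing Max_ge) auto
    then show ?thesis using nonempty[of "Max (insert 0 I)"] by blast
  qed
  moreover have "compact (K n)" for n unfolding K_def by (rule superlevel) simp
  ultimately have "K 0 \<inter> (\<Inter>n. K n) \<noteq> {}"
    by (metis compact_imp_fip_image compact_imp_closed)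
  then obtain u where u: "\<And>n. real n + 1 \<le> g u" by (auto simp: K_def)
  obtain n :: nat where "g u < real n" using reals_Archimedean2 by blast
  with u[of n] show False by linarith
qed

lemma C0_on_bounded:
  fixes S :: "'a::t2_space set"
  assumes "b \<in> C0_on S"
  shows "\<exists>M>0. \<forall>u\<in>S. norm (b u) \<le> M"
proof -
  have "compact {u\<in>S. t \<le> norm (b u)}" if "0 < t" for t
    using assms that by (simp add: C0_on_def)
  then obtain B where "\<forall>u\<in>S. norm (b u) \<le> B"
    using bounded_above_if_compact_superlevels[of S "\<lambda>u. norm (b u)"] by blast
  then show ?thesis by (intro exI[of _ "max B 1"]) (auto simp: le_max_iff_disj)
qed


lemma vanishes_off_fsupp: "y \<notin> fsupp f \<Longrightarrow> f y = 0"
  using closure_subset by (force simp: fsupp_def)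

lemma Cc_if_vanishing_with_Cc:
  assumes "continuous_on UNIV h" and f: "f \<in> Cc" and zeros: "\<And>x. f x = 0 \<Longrightarrow> h x = 0"
  shows "h \<in> Cc" and "fsupp h \<subseteq> fsupp f"
proof -
  show supp: "fsupp h \<subseteq> fsupp f"
    unfolding fsupp_def using zeros by (intro closure_mono) auto
  have "compact (fsupp f \<inter> fsupp h)"
    using f by (intro compact_Int_closed) (auto simp: Cc_def fsupp_def)
  with assms supp show "h \<in> Cc" by (simp add: Cc_def Int_absorb1)
qed

section \<open>\<open>N\<close>-functions and the Luxemburg gauge\<close>

lemma N_function_nonneg: "N_function \<Phi> \<Longrightarrow> 0 \<le> \<Phi> x"
  by (simp add: N_function_def)

lemma N_function_zero [simp]: "N_function \<Phi> \<Longrightarrow> \<Phi> 0 = 0"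
  by (simp add: N_function_def)

lemma borel_measurable_N_function_comp [measurable]:
  assumes "N_function \<Phi>" and "g \<in> borel_measurable M"
  shows "(\<lambda>y. \<Phi> (g y)) \<in> borel_measurable M"
  using assms by (intro borel_measurable_continuous_on[of \<Phi>]) (auto simp: N_function_def)

lemma N_function_convex:
  assumes "N_function \<Phi>" and "0 \<le> t" and "t \<le> 1"
  shows "\<Phi> (t * x + (1 - t) * y) \<le> t * \<Phi> x + (1 - t) * \<Phi> y"
  using assms convex_onD[of UNIV \<Phi> "1 - t" x y] by (simp add: N_function_def)

lemma N_function_scale_le:
  assumes "N_function \<Phi>" and "0 \<le> t" and "t \<le> 1"
  shows "\<Phi> (t * x) \<le> t * \<Phi> x"
  using N_function_convex[OF assms, of x 0] assms(1) by simp

lemma N_function_mono: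
  assumes \<Phi>: "N_function \<Phi>" and "0 \<le> x" and "x \<le> y"
  shows "\<Phi> x \<le> \<Phi> y"
proof (cases "y = 0")
  case False
  then have y: "0 < y" using assms by simp
  have "\<Phi> x = \<Phi> ((x / y) * y)" using y by simp
  also have "\<dots> \<le> (x / y) * \<Phi> y" using assms y by (intro N_function_scale_le) auto
  also have "\<dots> \<le> \<Phi> y"
    using assms y N_function_nonneg[OF \<Phi>, of y]
    by (simp add: divide_le_eq mult_right_mono mult.commute)
  finally show ?thesis .
qed (use assms in simp)

definition gauge_radii :: "'a measure \<Rightarrow> (real \<Rightarrow> real) \<Rightarrow> ('a \<Rightarrow> 'b::real_normed_vector) \<Rightarrow> real set" where
  "gauge_radii M \<Phi> a = {k. 0 < k \<and> (\<integral>\<^sup>+y. ennreal (\<Phi> (norm (a y) / k)) \<partial>M) \<le> 1}"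

lemma gauge_norm_eq_Inf_gauge_radii:
  "gauge_norm gmul ginv lam \<Phi> u f = Inf (gauge_radii (lam u) \<Phi> (restr gmul ginv u f))"
  by (simp add: gauge_norm_def gauge_radii_def)

lemma gauge_radii_pos: "k \<in> gauge_radii M \<Phi> a \<Longrightarrow> 0 < k"
  by (simp add: gauge_radii_def)

lemma bdd_below_gauge_radii: "bdd_below (gauge_radii M \<Phi> a)"
  by (auto simp: gauge_radii_def bdd_below_def intro!: exI[of _ 0])

lemma Inf_gauge_radii_nonneg: "gauge_radii M \<Phi> a \<noteq> {} \<Longrightarrow> 0 \<le> Inf (gauge_radii M \<Phi> a)"
  by (rule cInf_greatest) (auto simp: gauge_radii_def)

lemma Inf_gauge_radii_le: "k \<in> gauge_radii M \<Phi> a \<Longrightarrow> Inf (gauge_radii M \<Phi> a) \<le> k"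
  by (rule cInf_lower[OF _ bdd_below_gauge_radii])

lemma gauge_radii_of_modular_bound:
  assumes \<Phi>: "N_function \<Phi>" and "0 < \<alpha>" and "0 \<le> C" and [measurable]: "a \<in> borel_measurable M"
    and modular: "(\<integral>\<^sup>+y. ennreal (\<Phi> (\<alpha> * norm (a y))) \<partial>M) \<le> ennreal C"
  shows "max 1 C / \<alpha> \<in> gauge_radii M \<Phi> a"
proof -
  define c where "c = max 1 C"
  have c: "1 \<le> c" "C \<le> c" by (auto simp: c_def)
  have "\<Phi> (norm (a y) / (c / \<alpha>)) = \<Phi> ((1 / c) * (\<alpha> * norm (a y)))" for y
    using c assms(2) by (simp add: mult.commute)
  also have "\<dots> y \<le> (1 / c) * \<Phi> (\<alpha> * norm (a y))" for y
    using c by (intro N_function_scale_le[OF \<Phi>]) auto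
  finally have "(\<integral>\<^sup>+y. ennreal (\<Phi> (norm (a y) / (c / \<alpha>))) \<partial>M)
      \<le> (\<integral>\<^sup>+y. ennreal (1 / c) * ennreal (\<Phi> (\<alpha> * norm (a y))) \<partial>M)"
    using c N_function_nonneg[OF \<Phi>] by (intro nn_integral_mono) (simp add: ennreal_mult[symmetric])
  also have "\<dots> = ennreal (1 / c) * (\<integral>\<^sup>+y. ennreal (\<Phi> (\<alpha> * norm (a y))) \<partial>M)"
    using \<Phi> by (intro nn_integral_cmult) measurable
  also have "\<dots> \<le> ennreal (1 / c) * ennreal C"
    using modular by (rule mult_left_mono) simp
  also have "\<dots> \<le> 1"
    using c assms(3) by (simp add: ennreal_mult[symmetric] divide_le_eq_1)
  finally show ?thesis using c assms(2) by (simp add: gauge_radii_def c_def)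
qed

lemma gauge_radii_dominated_mem:
  assumes \<Phi>: "N_function \<Phi>" and k: "k \<in> gauge_radii M \<Phi> a" and "0 \<le> c" and "c * k < k'"
    and dom: "\<And>y. norm (a' y) \<le> c * norm (a y)"
  shows "k' \<in> gauge_radii M \<Phi> a'"
proof -
  have "0 < k" using gauge_radii_pos[OF k] .
  then have "0 < k'" using \<open>c * k < k'\<close> mult_nonneg_nonneg[OF \<open>0 \<le> c\<close>, of k] by linarith
  have "norm (a' y) / k' \<le> norm (a y) / k" for y
  proof -
    have "norm (a' y) * k \<le> c * norm (a y) * k"
      using dom[of y] \<open>0 < k\<close> by (simp add: mult_right_mono)
    also have "\<dots> = c * k * norm (a y)" by (simp add: ac_simps)
    also have "\<dots> \<le> k' * norm (a y)" using \<open>c * k < k'\<close> by (simp add: mult_right_mono)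
    finally show ?thesis using \<open>0 < k\<close> \<open>0 < k'\<close> by (simp add: divide_simps mult.commute)
  qed
  then have "(\<integral>\<^sup>+y. ennreal (\<Phi> (norm (a' y) / k')) \<partial>M) \<le> (\<integral>\<^sup>+y. ennreal (\<Phi> (norm (a y) / k)) \<partial>M)"
    using \<open>0 < k'\<close> by (intro nn_integral_mono ennreal_leI N_function_mono[OF \<Phi>]) auto
  also have "\<dots> \<le> 1" using k by (simp add: gauge_radii_def)
  finally show ?thesis using \<open>0 < k'\<close> by (simp add: gauge_radii_def)
qed

lemma gauge_radii_dominated:
  assumes \<Phi>: "N_function \<Phi>" and ne: "gauge_radii M \<Phi> a \<noteq> {}" and "0 \<le> c"
    and dom: "\<And>y. norm (a' y) \<le> c * norm (a y)"
  shows "gauge_radii M \<Phi> a' \<noteq> {}"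
    and "Inf (gauge_radii M \<Phi> a') \<le> c * Inf (gauge_radii M \<Phi> a)"
proof -
  note radius = gauge_radii_dominated_mem[OF \<Phi> _ \<open>0 \<le> c\<close> _ dom]
  obtain k where "k \<in> gauge_radii M \<Phi> a" using ne by blast
  then have "c * k + 1 \<in> gauge_radii M \<Phi> a'" by (rule radius) simp
  then show "gauge_radii M \<Phi> a' \<noteq> {}" by blast
  have "Inf (gauge_radii M \<Phi> a') \<le> c * k" if "k \<in> gauge_radii M \<Phi> a" for k
    by (rule dense_ge) (rule Inf_gauge_radii_le[OF radius[OF that]])
  then show "Inf (gauge_radii M \<Phi> a') \<le> c * Inf (gauge_radii M \<Phi> a)"
    by (rule le_mult_cInf[OF ne \<open>0 \<le> c\<close>])
qed

lemma gauge_radii_add_mem: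
  assumes \<Phi>: "N_function \<Phi>"
    and k1: "k1 \<in> gauge_radii M \<Phi> a1" and k2: "k2 \<in> gauge_radii M \<Phi> a2"
    and [measurable]: "a1 \<in> borel_measurable M" "a2 \<in> borel_measurable M"
    and le: "\<And>y. norm (a y) \<le> norm (a1 y) + norm (a2 y)"
  shows "k1 + k2 \<in> gauge_radii M \<Phi> a"
proof -
  have "0 < k1" "0 < k2" using k1 k2 by (auto simp: gauge_radii_def)
  define t where "t = k1 / (k1 + k2)"
  have t: "0 \<le> t" "t \<le> 1" "1 - t = k2 / (k1 + k2)"
    using \<open>0 < k1\<close> \<open>0 < k2\<close> by (auto simp: t_def field_simps)
  have "\<Phi> (norm (a y) / (k1 + k2)) \<le> t * \<Phi> (norm (a1 y) / k1) + (1 - t) * \<Phi> (norm (a2 y) / k2)" for y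
  proof -
    have "norm (a y) / (k1 + k2) \<le> t * (norm (a1 y) / k1) + (1 - t) * (norm (a2 y) / k2)"
      using le[of y] \<open>0 < k1\<close> \<open>0 < k2\<close> t(3)
      by (simp add: t_def divide_right_mono add_divide_distrib[symmetric])
    then have "\<Phi> (norm (a y) / (k1 + k2)) \<le> \<Phi> (t * (norm (a1 y) / k1) + (1 - t) * (norm (a2 y) / k2))"
      using \<open>0 < k1\<close> \<open>0 < k2\<close> by (intro N_function_mono[OF \<Phi>]) auto
    also have "\<dots> \<le> t * \<Phi> (norm (a1 y) / k1) + (1 - t) * \<Phi> (norm (a2 y) / k2)"
      using t by (intro N_function_convex[OF \<Phi>]) auto
    finally show ?thesis .
  qed
  then have "(\<integral>\<^sup>+y. ennreal (\<Phi> (norm (a y) / (k1 + k2))) \<partial>M)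
     \<le> (\<integral>\<^sup>+y. ennreal t * ennreal (\<Phi> (norm (a1 y) / k1))
           + ennreal (1 - t) * ennreal (\<Phi> (norm (a2 y) / k2)) \<partial>M)"
    using t N_function_nonneg[OF \<Phi>]
    by (intro nn_integral_mono)
      (simp only: ennreal_mult[symmetric] ennreal_plus[symmetric] ennreal_leI diff_ge_0_iff_ge
         mult_nonneg_nonneg add_nonneg_nonneg)
  also have "\<dots> = ennreal t * (\<integral>\<^sup>+y. ennreal (\<Phi> (norm (a1 y) / k1)) \<partial>M)
               + ennreal (1 - t) * (\<integral>\<^sup>+y. ennreal (\<Phi> (norm (a2 y) / k2)) \<partial>M)"
    using \<Phi> by (simp add: nn_integral_add nn_integral_cmult)
  also have "\<dots> \<le> ennreal t * 1 + ennreal (1 - t) * 1"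
    using k1 k2 by (intro add_mono mult_left_mono) (auto simp: gauge_radii_def)
  also have "\<dots> = 1" using t by (simp add: ennreal_plus[symmetric] del: ennreal_plus)
  finally show ?thesis using \<open>0 < k1\<close> \<open>0 < k2\<close> by (simp add: gauge_radii_def)
qed

lemma gauge_radii_triangle:
  assumes \<Phi>: "N_function \<Phi>"
    and ne1: "gauge_radii M \<Phi> a1 \<noteq> {}" and ne2: "gauge_radii M \<Phi> a2 \<noteq> {}"
    and "a1 \<in> borel_measurable M" "a2 \<in> borel_measurable M"
    and "\<And>y. norm (a y) \<le> norm (a1 y) + norm (a2 y)"
  shows "gauge_radii M \<Phi> a \<noteq> {}"
    and "Inf (gauge_radii M \<Phi> a) \<le> Inf (gauge_radii M \<Phi> a1) + Inf (gauge_radii M \<Phi> a2)"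
proof -
  note radius = gauge_radii_add_mem[OF \<Phi> _ _ assms(4-6)]
  obtain k1 k2 where "k1 \<in> gauge_radii M \<Phi> a1" "k2 \<in> gauge_radii M \<Phi> a2" using ne1 ne2 by blast
  then show "gauge_radii M \<Phi> a \<noteq> {}" using radius by blast
  show "Inf (gauge_radii M \<Phi> a) \<le> Inf (gauge_radii M \<Phi> a1) + Inf (gauge_radii M \<Phi> a2)"
    using ne1 ne2 by (rule le_cInf_add_cInf) (rule Inf_gauge_radii_le[OF radius])
qed

section \<open>Groupoids with a left Haar system\<close>

locale haar_groupoid =
  fixes G2 :: "('g::{t2_space, second_countable_topology} \<times> 'g) set"
    and gmul :: "'g \<Rightarrow> 'g \<Rightarrow> 'g" and ginv :: "'g \<Rightarrow> 'g"
    and lam :: "'g \<Rightarrow> 'g measure"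
  assumes topological_groupoid: "topological_groupoid G2 gmul ginv"
    and left_haar_system: "left_haar_system gmul ginv lam"
begin

abbreviation "G0 \<equiv> unit_space gmul ginv"
abbreviation "r \<equiv> gr gmul ginv"
abbreviation "d \<equiv> gd gmul ginv"

lemma r_in_G0 [simp]: "r x \<in> G0"
  by (simp add: unit_space_def)

lemma d_eq_r_inv: "d x = r (ginv x)"
  using topological_groupoid by (simp add: gd_def gr_def topological_groupoid_def groupoid_def)

lemma d_in_G0 [simp]: "d x \<in> G0"
  by (simp add: d_eq_r_inv)

lemma continuous_on_r: "continuous_on UNIV r"
proof -
  have mult: "continuous_on G2 (\<lambda>p. gmul (fst p) (snd p))" and ginv: "continuous_on UNIV ginv"
    and "\<forall>x. (ginv x, x) \<in> G2" and "\<forall>x. ginv (ginv x) = x"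
    using topological_groupoid by (auto simp: topological_groupoid_def groupoid_def)
  then have "range (\<lambda>x. (x, ginv x)) \<subseteq> G2" by (metis image_subset_iff)
  moreover have "continuous_on UNIV (\<lambda>x. (x, ginv x))" by (intro continuous_intros ginv)
  ultimately have "continuous_on UNIV (\<lambda>x. gmul (fst (x, ginv x)) (snd (x, ginv x)))"
    by (intro continuous_on_compose2[OF mult, of UNIV "\<lambda>x. (x, ginv x)"])
  then show ?thesis by (simp add: gr_def[abs_def])
qed

lemma continuous_on_d: "continuous_on UNIV d"
  using topological_groupoid continuous_on_compose2[OF continuous_on_r, of UNIV ginv]
  by (simp add: d_eq_r_inv[abs_def] topological_groupoid_def)

lemma continuous_on_comp_r: "continuous_on G0 b \<Longrightarrow> continuous_on UNIV (\<lambda>x. b (r x))"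
  by (rule continuous_on_compose2[OF _ continuous_on_r]) auto

lemma continuous_on_comp_d: "continuous_on G0 b \<Longrightarrow> continuous_on UNIV (\<lambda>x. b (d x))"
  by (rule continuous_on_compose2[OF _ continuous_on_d]) auto

lemma Cc_mult_comp_r:
  assumes "continuous_on G0 b" and f: "f \<in> Cc"
  shows "(\<lambda>x. b (r x) * f x) \<in> Cc" and "fsupp (\<lambda>x. b (r x) * f x) \<subseteq> fsupp f"
proof -
  have "continuous_on UNIV (\<lambda>x. b (r x) * f x)"
    using continuous_on_comp_r[OF assms(1)] f by (intro continuous_on_mult) (auto simp: Cc_def)
  from Cc_if_vanishing_with_Cc[OF this f]
  show "(\<lambda>x. b (r x) * f x) \<in> Cc" and "fsupp (\<lambda>x. b (r x) * f x) \<subseteq> fsupp f" by simp_all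
qed

lemma Cc_mult_comp_d:
  assumes "continuous_on G0 b" and f: "f \<in> Cc"
  shows "(\<lambda>x. b (d x) * f x) \<in> Cc"
proof -
  have "continuous_on UNIV (\<lambda>x. b (d x) * f x)"
    using continuous_on_comp_d[OF assms(1)] f by (intro continuous_on_mult) (auto simp: Cc_def)
  from Cc_if_vanishing_with_Cc(1)[OF this f] show ?thesis by simp
qed

lemma sets_lam [measurable_cong]: "u \<in> G0 \<Longrightarrow> sets (lam u) = sets borel"
  using left_haar_system by (simp add: left_haar_system_def radon_measure_def)

lemma space_lam: "u \<in> G0 \<Longrightarrow> space (lam u) = UNIV"
  using sets_eq_imp_space_eq[OF sets_lam] by simp

lemma emeasure_lam_compact_finite: "u \<in> G0 \<Longrightarrow> compact K \<Longrightarrow> emeasure (lam u) K < \<infinity>"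
  using left_haar_system by (simp add: left_haar_system_def radon_measure_def)

lemma borel_measurable_lam:
  "u \<in> G0 \<Longrightarrow> f \<in> borel_measurable borel \<Longrightarrow> f \<in> borel_measurable (lam u)"
  using measurable_cong_sets[OF sets_lam refl] by blast

lemma closed_fibre: "closed {y. r y = u}"
  by (rule closed_Collect_eq[OF continuous_on_r continuous_on_const])

lemma restr_measurable:
  assumes "u \<in> G0" and "f \<in> borel_measurable (lam u)"
  shows "restr gmul ginv u f \<in> borel_measurable (lam u)"
proof -
  have "{y. r y = u} \<in> sets (lam u)" using assms(1) closed_fibre by (simp add: sets_lam)
  then show ?thesis
    using measurable_If_set[OF assms(2) _, of "\<lambda>_. 0" "{y. r y = u}"] assms(1)
    by (simp add: restr_def[abs_def] space_lam)
qed

lemma Cc_measurable: "u \<in> G0 \<Longrightarrow> f \<in> Cc \<Longrightarrow> f \<in> borel_measurable (lam u)"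
  by (auto simp: Cc_def intro: borel_measurable_lam borel_measurable_continuous_onI)

text \<open>The support of \<open>lam u\<close> is the fibre \<open>G\<^sup>u\<close>; second countability makes its complement,
  a union of open null sets, a null set.\<close>
lemma AE_lam_fibre:
  assumes u: "u \<in> G0"
  shows "AE y in lam u. r y = u"
proof -
  define F where "F = {U. open U \<and> emeasure (lam u) U = 0}"
  have fibre_compl: "- {y. r y = u} = \<Union>F"
    using u left_haar_system by (auto simp: left_haar_system_def measure_support_def F_def)
  obtain F' where F': "F' \<subseteq> F" "countable F'" "\<Union>F' = \<Union>F"
    by (rule Lindelof[of F]) (auto simp: F_def)
  have "\<Union>F' \<in> null_sets (lam u)"
    using F' u by (intro null_sets_UN'[of F' id, simplified]) (auto simp: F_def sets_lam null_setsI)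
  then show ?thesis
    using F'(3) fibre_compl by (intro AE_I'[of "\<Union>F'"]) auto
qed

lemma integrable_lam_compact_support:
  fixes f :: "'g \<Rightarrow> 'b::{banach, second_countable_topology}"
  assumes u: "u \<in> G0" and f: "continuous_on UNIV f" and "compact K" and zero: "\<And>y. y \<notin> K \<Longrightarrow> f y = 0"
  shows "integrable (lam u) f"
proof -
  obtain B where "\<forall>y\<in>K. norm (f y) \<le> B"
    using compact_imp_bounded[OF compact_continuous_image[OF continuous_on_subset[OF f] \<open>compact K\<close>]]
    by (auto simp: bounded_iff)
  then show ?thesis
    using u f \<open>compact K\<close> zero emeasure_lam_compact_finite
    by (intro integrableI_bounded_set[where A=K and B=B])
      (auto simp: sets_lam compact_imp_closed intro: borel_measurable_lam borel_measurable_continuous_onI)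
qed

lemma haar_integral_Cc_bounded:
  assumes f: "f \<in> Cc"
  shows "\<exists>C. \<forall>u\<in>G0. norm (\<integral>y. f y \<partial>lam u) \<le> C"
proof -
  define K where "K = fsupp f"
  have "compact K" using f by (simp add: Cc_def K_def)
  then have "compact (r ` K)"
    by (metis compact_continuous_image continuous_on_subset continuous_on_r subset_UNIV)
  moreover have "continuous_on G0 (\<lambda>u. \<integral>y. f y \<partial>lam u)"
    using f left_haar_system by (simp add: left_haar_system_def)
  ultimately have "compact ((\<lambda>u. \<integral>y. f y \<partial>lam u) ` r ` K)"
    by (metis compact_continuous_image continuous_on_subset image_subsetI r_in_G0)
  then obtain C where C: "\<forall>u\<in>r ` K. norm (\<integral>y. f y \<partial>lam u) \<le> C"
    by (auto simp: bounded_iff dest!: compact_imp_bounded)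
  have "(\<integral>y. f y \<partial>lam u) = 0" if "u \<in> G0" "u \<notin> r ` K" for u
  proof (rule integral_eq_zero_AE)
    have "r y = u \<longrightarrow> f y = 0" for y
      using \<open>u \<notin> r ` K\<close> vanishes_off_fsupp[of y f] by (auto simp: K_def)
    then show "AE y in lam u. f y = 0"
      using AE_lam_fibre[OF \<open>u \<in> G0\<close>] by (auto elim: AE_mp)
  qed
  then have "norm (\<integral>y. f y \<partial>lam u) \<le> max C 0" if "u \<in> G0" for u
    using C that by (cases "u \<in> r ` K") (auto simp: le_max_iff_disj)
  then show ?thesis by blast
qed

lemma Cc_modular_bounded:
  assumes \<Phi>: "N_function \<Phi>" and f: "f \<in> Cc"
  shows "\<exists>C\<ge>0. \<forall>u\<in>G0. (\<integral>\<^sup>+y. ennreal (\<Phi> (norm (restr gmul ginv u f y))) \<partial>lam u) \<le> ennreal C"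
proof -
  define \<psi> where "\<psi> y = \<Phi> (norm (f y))" for y
  have "continuous_on UNIV \<psi>"
    using \<Phi> f unfolding \<psi>_def[abs_def] N_function_def Cc_def
    by (auto intro: continuous_on_compose2[of UNIV \<Phi>, OF _ continuous_on_norm])
  then have "(\<lambda>y. complex_of_real (\<psi> y)) \<in> Cc"
    by (rule Cc_if_vanishing_with_Cc(1)[OF continuous_on_of_real f]) (simp add: \<psi>_def \<Phi>)
  then obtain C where "\<forall>u\<in>G0. norm (\<integral>y. complex_of_real (\<psi> y) \<partial>lam u) \<le> C"
    using haar_integral_Cc_bounded by blast
  then have C: "\<bar>\<integral>y. \<psi> y \<partial>lam u\<bar> \<le> C" if "u \<in> G0" for u
    using that by simp
  have \<psi>_nonneg: "0 \<le> \<psi> y" for y by (simp add: \<psi>_def N_function_nonneg[OF \<Phi>])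
  have "(\<integral>\<^sup>+y. ennreal (\<Phi> (norm (restr gmul ginv u f y))) \<partial>lam u) \<le> ennreal C" if u: "u \<in> G0" for u
  proof -
    have "integrable (lam u) \<psi>"
      using u f \<Phi> \<open>continuous_on UNIV \<psi>\<close> vanishes_off_fsupp[of _ f]
      by (intro integrable_lam_compact_support[where K="fsupp f"]) (auto simp: Cc_def \<psi>_def)
    have "(\<integral>\<^sup>+y. ennreal (\<Phi> (norm (restr gmul ginv u f y))) \<partial>lam u) \<le> (\<integral>\<^sup>+y. ennreal (\<psi> y) \<partial>lam u)"
      using \<Phi> by (intro nn_integral_mono) (auto simp: restr_def \<psi>_def N_function_nonneg)
    also have "\<dots> = ennreal (\<integral>y. \<psi> y \<partial>lam u)"
      using \<open>integrable (lam u) \<psi>\<close> \<psi>_nonneg by (intro nn_integral_eq_integral) auto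
    also have "\<dots> \<le> ennreal C" using C[OF u] by (intro ennreal_leI) simp
    finally show ?thesis .
  qed
  moreover have "0 \<le> C" using C[of "r undefined"] by simp
  ultimately show ?thesis by blast
qed

end

section \<open>Fibrewise Orlicz norms and the section spaces \<open>E\<^sub>0\<close>\<close>

locale haar_groupoid_orlicz = haar_groupoid G2 gmul ginv lam
  for G2 :: "('g::{t2_space, second_countable_topology} \<times> 'g) set" and gmul ginv lam +
  fixes \<Phi> :: "real \<Rightarrow> real"
  assumes N_function: "N_function \<Phi>"
begin

abbreviation "fibre_radii u f \<equiv> gauge_radii (lam u) \<Phi> (restr gmul ginv u f)"
abbreviation "fibre_norm u f \<equiv> gauge_norm gmul ginv lam \<Phi> u f"
abbreviation "section_norm \<xi> \<equiv> E0_norm gmul ginv lam \<Phi> \<xi>"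

lemma fibre_norm_nonneg: "fibre_radii u f \<noteq> {} \<Longrightarrow> 0 \<le> fibre_norm u f"
  unfolding gauge_norm_eq_Inf_gauge_radii by (rule Inf_gauge_radii_nonneg)

lemma fibre_norm_dominated:
  assumes "fibre_radii u f \<noteq> {}" and "0 \<le> c"
    and dom: "\<And>y. r y = u \<Longrightarrow> norm (f' y) \<le> c * norm (f y)"
  shows "fibre_radii u f' \<noteq> {}" and "fibre_norm u f' \<le> c * fibre_norm u f"
proof -
  have "norm (restr gmul ginv u f' y) \<le> c * norm (restr gmul ginv u f y)" for y
    using dom[of y] by (simp add: restr_def)
  from gauge_radii_dominated[OF N_function assms(1,2) this]
  show "fibre_radii u f' \<noteq> {}" and "fibre_norm u f' \<le> c * fibre_norm u f"
    by (simp_all add: gauge_norm_eq_Inf_gauge_radii)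
qed

lemma fibre_norm_scale:
  assumes ne: "fibre_radii u f \<noteq> {}"
  shows "fibre_radii u (\<lambda>y. c * f y) \<noteq> {}" and "fibre_norm u (\<lambda>y. c * f y) = norm c * fibre_norm u f"
proof -
  show ne': "fibre_radii u (\<lambda>y. c * f y) \<noteq> {}"
    using fibre_norm_dominated(1)[OF ne, of "norm c"] by (simp add: norm_mult)
  have le: "fibre_norm u (\<lambda>y. c * f y) \<le> norm c * fibre_norm u f"
    using fibre_norm_dominated(2)[OF ne, of "norm c"] by (simp add: norm_mult)
  show "fibre_norm u (\<lambda>y. c * f y) = norm c * fibre_norm u f"
  proof (cases "c = 0")
    case True
    then show ?thesis using le fibre_norm_nonneg[OF ne'] by simp
  next
    case False
    have "fibre_norm u f \<le> (1 / norm c) * fibre_norm u (\<lambda>y. c * f y)"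
      using False by (intro fibre_norm_dominated(2)[OF ne']) (simp_all add: norm_mult)
    then show ?thesis using le False by (simp add: field_simps)
  qed
qed

lemma fibre_norm_diff:
  assumes "fibre_radii u f \<noteq> {}" and "fibre_radii u g \<noteq> {}"
    and "restr gmul ginv u f \<in> borel_measurable (lam u)"
    and "restr gmul ginv u g \<in> borel_measurable (lam u)"
  shows "fibre_radii u (\<lambda>y. f y - g y) \<noteq> {}"
    and "fibre_norm u (\<lambda>y. f y - g y) \<le> fibre_norm u f + fibre_norm u g"
proof -
  have "norm (restr gmul ginv u (\<lambda>y. f y - g y) y)
      \<le> norm (restr gmul ginv u f y) + norm (restr gmul ginv u g y)" for y
    by (simp add: restr_def norm_triangle_ineq4)
  from gauge_radii_triangle[OF N_function assms this]
  show "fibre_radii u (\<lambda>y. f y - g y) \<noteq> {}"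
    and "fibre_norm u (\<lambda>y. f y - g y) \<le> fibre_norm u f + fibre_norm u g"
    by (simp_all add: gauge_norm_eq_Inf_gauge_radii)
qed

lemma in_orlicz_iff:
  "in_orlicz gmul ginv lam \<Phi> u f \<longleftrightarrow>
     restr gmul ginv u f \<in> borel_measurable (lam u) \<and> fibre_radii u f \<noteq> {}"
proof
  assume "in_orlicz gmul ginv lam \<Phi> u f"
  then obtain \<alpha> where meas: "restr gmul ginv u f \<in> borel_measurable (lam u)" and "0 < \<alpha>"
    and finite: "(\<integral>\<^sup>+y. ennreal (\<Phi> (\<alpha> * norm (restr gmul ginv u f y))) \<partial>lam u) < \<infinity>"
    by (auto simp: in_orlicz_def)
  then obtain C where "0 \<le> C" "(\<integral>\<^sup>+y. ennreal (\<Phi> (\<alpha> * norm (restr gmul ginv u f y))) \<partial>lam u) = ennreal C"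
    by (cases "\<integral>\<^sup>+y. ennreal (\<Phi> (\<alpha> * norm (restr gmul ginv u f y))) \<partial>lam u" rule: ennreal_cases) auto
  with gauge_radii_of_modular_bound[OF N_function \<open>0 < \<alpha>\<close> _ meas]
  show "restr gmul ginv u f \<in> borel_measurable (lam u) \<and> fibre_radii u f \<noteq> {}"
    using meas by auto
next
  assume "restr gmul ginv u f \<in> borel_measurable (lam u) \<and> fibre_radii u f \<noteq> {}"
  then obtain k where meas: "restr gmul ginv u f \<in> borel_measurable (lam u)"
    and k: "k \<in> fibre_radii u f" by blast
  then have "0 < k" by (simp add: gauge_radii_pos)
  have "(\<integral>\<^sup>+y. ennreal (\<Phi> ((1 / k) * norm (restr gmul ginv u f y))) \<partial>lam u) \<le> 1"
    using k by (simp add: gauge_radii_def)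
  then show "in_orlicz gmul ginv lam \<Phi> u f"
    using meas \<open>0 < k\<close> unfolding in_orlicz_def
    by (intro conjI exI[of _ "1 / k"]) (auto intro: le_less_trans[OF _ ennreal_less_top[of 1]])
qed

lemma Cc_fibre_norm_bounded:
  assumes "f \<in> Cc"
  shows "\<exists>B. \<forall>u\<in>G0. fibre_radii u f \<noteq> {} \<and> fibre_norm u f \<le> B"
proof -
  obtain C where "0 \<le> C"
    and C: "\<And>u. u \<in> G0 \<Longrightarrow> (\<integral>\<^sup>+y. ennreal (\<Phi> (norm (restr gmul ginv u f y))) \<partial>lam u) \<le> ennreal C"
    using Cc_modular_bounded[OF N_function assms] by auto
  have "max 1 C / 1 \<in> fibre_radii u f" if "u \<in> G0" for u
    using that assms \<open>0 \<le> C\<close> C[OF that]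
    by (intro gauge_radii_of_modular_bound[OF N_function]) (auto intro: restr_measurable Cc_measurable)
  then show ?thesis
    unfolding gauge_norm_eq_Inf_gauge_radii by (metis Inf_gauge_radii_le empty_iff)
qed

lemma E0_in_orlicz:
  assumes "\<xi> \<in> E0 gmul ginv lam \<Phi>" and "u \<in> G0"
  shows "fibre_radii u (\<xi> u) \<noteq> {}" and "restr gmul ginv u (\<xi> u) \<in> borel_measurable (lam u)"
  using assms by (auto simp: E0_def in_orlicz_iff)

lemma E0_fibre_norm_bounded:
  assumes "\<xi> \<in> E0 gmul ginv lam \<Phi>"
  shows "\<exists>B. \<forall>u\<in>G0. fibre_norm u (\<xi> u) \<le> B"
  using assms by (intro bounded_above_if_compact_superlevels) (simp add: E0_def)

lemma E0_diff_Cc_fibre_norm_bounded: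
  assumes \<xi>: "\<xi> \<in> E0 gmul ginv lam \<Phi>" and f: "f \<in> Cc"
  shows "\<exists>B. \<forall>u\<in>G0. fibre_radii u (\<lambda>y. \<xi> u y - f y) \<noteq> {} \<and> fibre_norm u (\<lambda>y. \<xi> u y - f y) \<le> B"
proof -
  obtain B1 where B1: "\<forall>u\<in>G0. fibre_norm u (\<xi> u) \<le> B1"
    using E0_fibre_norm_bounded[OF \<xi>] by blast
  obtain B2 where B2: "\<forall>u\<in>G0. fibre_radii u f \<noteq> {} \<and> fibre_norm u f \<le> B2"
    using Cc_fibre_norm_bounded[OF f] by blast
  have "fibre_radii u (\<lambda>y. \<xi> u y - f y) \<noteq> {} \<and> fibre_norm u (\<lambda>y. \<xi> u y - f y) \<le> B1 + B2"
    if u: "u \<in> G0" for u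
    using fibre_norm_diff[OF E0_in_orlicz(1)[OF \<xi> u], of f] E0_in_orlicz(2)[OF \<xi> u] B1 B2 u
      restr_measurable[OF u Cc_measurable[OF u f]]
    by fastforce
  then show ?thesis by blast
qed

lemma fibre_norm_le_E0_norm:
  "\<forall>v\<in>G0. fibre_norm v (\<xi> v) \<le> B \<Longrightarrow> u \<in> G0 \<Longrightarrow> fibre_norm u (\<xi> u) \<le> section_norm \<xi>"
  unfolding E0_norm_def by (rule cSUP_upper) (auto simp: bdd_above_def)

lemma E0_norm_le: "(\<And>u. u \<in> G0 \<Longrightarrow> fibre_norm u (\<xi> u) \<le> c) \<Longrightarrow> section_norm \<xi> \<le> c"
  unfolding E0_norm_def by (rule cSUP_least) (auto simp: unit_space_def)

lemma E0_norm_nonneg: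
  assumes "\<xi> \<in> E0 gmul ginv lam \<Phi>"
  shows "0 \<le> section_norm \<xi>"
proof -
  obtain B where "\<forall>u\<in>G0. fibre_norm u (\<xi> u) \<le> B" using E0_fibre_norm_bounded[OF assms] by blast
  then have "fibre_norm (r x) (\<xi> (r x)) \<le> section_norm \<xi>" for x
    by (rule fibre_norm_le_E0_norm) simp
  moreover have "0 \<le> fibre_norm (r x) (\<xi> (r x))" for x
    using E0_in_orlicz(1)[OF assms r_in_G0] by (rule fibre_norm_nonneg)
  ultimately show ?thesis by (meson order_trans)
qed

lemma fibre_norm_scaled_diff_le:
  assumes "u \<in> G0" and "0 \<le> M" and "norm (b u) \<le> M"
    and "fibre_radii u (\<lambda>y. \<xi> u y - f y) \<noteq> {}"
  shows "fibre_norm u (\<lambda>y. b u * \<xi> u y - b (r y) * f y) \<le> M * fibre_norm u (\<lambda>y. \<xi> u y - f y)"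
proof (rule fibre_norm_dominated(2)[OF assms(4,2)])
  fix y assume "r y = u"
  then have "norm (b u * \<xi> u y - b (r y) * f y) = norm (b u) * norm (\<xi> u y - f y)"
    by (simp add: norm_mult[symmetric] right_diff_distrib)
  also have "\<dots> \<le> M * norm (\<xi> u y - f y)" using assms(3) by (rule mult_right_mono) simp
  finally show "norm (b u * \<xi> u y - b (r y) * f y) \<le> M * norm (\<xi> u y - f y)" .
qed

lemma E0_scale_locally_approximable:
  assumes \<xi>: "\<xi> \<in> E0 gmul ginv lam \<Phi>" and b: "continuous_on G0 b"
    and "0 < M" and bound: "\<And>u. u \<in> G0 \<Longrightarrow> norm (b u) \<le> M"
    and "u0 \<in> G0" and "0 < e"
  shows "\<exists>f\<in>Cc. \<exists>U. open U \<and> u0 \<in> U \<and> (\<forall>u\<in>U \<inter> G0. fibre_norm u (\<lambda>y. b u * \<xi> u y - f y) < e)"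
proof -
  have approx: "\<forall>u0\<in>G0. \<forall>e>0. \<exists>f\<in>Cc. \<exists>U. open U \<and> u0 \<in> U \<and>
      (\<forall>u\<in>U \<inter> G0. fibre_norm u (\<lambda>y. \<xi> u y - f y) < e)"
    using \<xi> by (simp add: E0_def)
  have "0 < e / M" using \<open>0 < e\<close> \<open>0 < M\<close> by simp
  from approx[rule_format, OF \<open>u0 \<in> G0\<close> this]
  obtain f U where f: "f \<in> Cc" and "open U" "u0 \<in> U"
    and close: "\<forall>u\<in>U \<inter> G0. fibre_norm u (\<lambda>y. \<xi> u y - f y) < e / M"
    by blast
  have radii: "\<forall>u\<in>G0. fibre_radii u (\<lambda>y. \<xi> u y - f y) \<noteq> {}"
    using E0_diff_Cc_fibre_norm_bounded[OF \<xi> f] by blast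
  have "fibre_norm u (\<lambda>y. b u * \<xi> u y - b (r y) * f y) < e" if "u \<in> U \<inter> G0" for u
  proof -
    have "fibre_norm u (\<lambda>y. b u * \<xi> u y - b (r y) * f y) \<le> M * fibre_norm u (\<lambda>y. \<xi> u y - f y)"
      using that radii bound \<open>0 < M\<close> by (intro fibre_norm_scaled_diff_le) auto
    also have "\<dots> < M * (e / M)" using close that \<open>0 < M\<close> by (simp del: times_divide_eq_right)
    finally show ?thesis using \<open>0 < M\<close> by simp
  qed
  then show ?thesis using Cc_mult_comp_r(1)[OF b f] \<open>open U\<close> \<open>u0 \<in> U\<close>
    by (intro bexI[of _ "\<lambda>y. b (r y) * f y"] exI[of _ U]) auto
qed

lemma E0_scale_superlevel_compact:
  assumes \<xi>: "\<xi> \<in> E0 gmul ginv lam \<Phi>" and b: "continuous_on G0 b"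
    and "0 < M" and bound: "\<And>u. u \<in> G0 \<Longrightarrow> norm (b u) \<le> M" and "0 < e"
  shows "compact {u\<in>G0. e \<le> fibre_norm u (\<lambda>y. b u * \<xi> u y)}"
proof -
  have "fibre_norm u (\<lambda>y. b u * \<xi> u y) = norm (b u) * fibre_norm u (\<xi> u)" if "u \<in> G0" for u
    by (rule fibre_norm_scale(2)[OF E0_in_orlicz(1)[OF \<xi> that]])
  then have "{u\<in>G0. e \<le> fibre_norm u (\<lambda>y. b u * \<xi> u y)} = {u\<in>G0. e \<le> norm (b u) * fibre_norm u (\<xi> u)}"
    by auto
  moreover have "0 \<le> fibre_norm u (\<xi> u)" if "u \<in> G0" for u
    by (rule fibre_norm_nonneg[OF E0_in_orlicz(1)[OF \<xi> that]])
  moreover have "compact {u\<in>G0. t \<le> fibre_norm u (\<xi> u)}" if "0 < t" for t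
    using \<xi> that by (simp add: E0_def)
  ultimately show ?thesis
    using bound
    by (simp only:) (intro compact_superlevel_mult[OF continuous_on_norm[OF b] \<open>0 < M\<close> _ _ _ \<open>0 < e\<close>]; simp)
qed

lemma E0_scale:
  assumes \<xi>: "\<xi> \<in> E0 gmul ginv lam \<Phi>" and b: "continuous_on G0 b"
    and "0 < M" and bound: "\<And>u. u \<in> G0 \<Longrightarrow> norm (b u) \<le> M"
  shows "(\<lambda>u y. b u * \<xi> u y) \<in> E0 gmul ginv lam \<Phi>"
proof -
  have "in_orlicz gmul ginv lam \<Phi> u (\<lambda>y. b u * \<xi> u y)" if u: "u \<in> G0" for u
  proof -
    have "restr gmul ginv u (\<lambda>y. b u * \<xi> u y) = (\<lambda>y. b u * restr gmul ginv u (\<xi> u) y)"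
      by (auto simp: restr_def)
    then have "restr gmul ginv u (\<lambda>y. b u * \<xi> u y) \<in> borel_measurable (lam u)"
      using E0_in_orlicz(2)[OF \<xi> u] by simp
    then show ?thesis
      using fibre_norm_scale(1)[OF E0_in_orlicz(1)[OF \<xi> u]] in_orlicz_iff by blast
  qed
  with E0_scale_locally_approximable[OF assms] E0_scale_superlevel_compact[OF assms]
  show ?thesis by (simp add: E0_def)
qed

lemma E0P_norm_nonneg: "\<xi> \<in> E0P gmul ginv lam \<Phi> P \<Longrightarrow> 0 \<le> section_norm \<xi>"
  by (simp add: E0P_def E0_norm_nonneg)

lemma E0P_norm_scale_le:
  assumes \<xi>: "\<xi> \<in> E0P gmul ginv lam \<Phi> P" and "0 \<le> M" and bound: "\<And>u. u \<in> G0 \<Longrightarrow> norm (b u) \<le> M"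
  shows "section_norm (\<lambda>u y. b u * \<xi> u y) \<le> M * section_norm \<xi>"
proof (rule E0_norm_le)
  fix u assume u: "u \<in> G0"
  have \<xi>: "\<xi> \<in> E0 gmul ginv lam \<Phi>" using \<xi> by (simp add: E0P_def)
  obtain B where B: "\<forall>u\<in>G0. fibre_norm u (\<xi> u) \<le> B" using E0_fibre_norm_bounded[OF \<xi>] by blast
  have "fibre_norm u (\<lambda>y. b u * \<xi> u y) = norm (b u) * fibre_norm u (\<xi> u)"
    by (rule fibre_norm_scale(2)[OF E0_in_orlicz(1)[OF \<xi> u]])
  also have "\<dots> \<le> M * section_norm \<xi>"
    using bound[OF u] fibre_norm_le_E0_norm[OF B u] fibre_norm_nonneg[OF E0_in_orlicz(1)[OF \<xi> u]] \<open>0 \<le> M\<close>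
    by (intro mult_mono) auto
  finally show "fibre_norm u (\<lambda>y. b u * \<xi> u y) \<le> M * section_norm \<xi>" .
qed

lemma E0P_scale:
  assumes \<xi>: "\<xi> \<in> E0P gmul ginv lam \<Phi> P" and b: "continuous_on G0 b"
    and "0 < M" and bound: "\<And>u. u \<in> G0 \<Longrightarrow> norm (b u) \<le> M"
  shows "(\<lambda>u y. b u * \<xi> u y) \<in> E0P gmul ginv lam \<Phi> P"
proof -
  have \<xi>E0: "\<xi> \<in> E0 gmul ginv lam \<Phi>" using \<xi> by (simp add: E0P_def)
  have "\<exists>f\<in>Cc. fsupp f \<subseteq> P \<and> section_norm (\<lambda>u y. b u * \<xi> u y - f y) < e" if "0 < e" for e
  proof -
    have approx: "\<forall>e>0. \<exists>f\<in>Cc. fsupp f \<subseteq> P \<and> section_norm (\<lambda>u y. \<xi> u y - f y) < e"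
      using \<xi> by (simp add: E0P_def)
    have "0 < e / M" using that \<open>0 < M\<close> by simp
    from approx[rule_format, OF this]
    obtain f where f: "f \<in> Cc" "fsupp f \<subseteq> P"
      and close: "section_norm (\<lambda>u y. \<xi> u y - f y) < e / M"
      by blast
    obtain B where B: "\<forall>u\<in>G0. fibre_radii u (\<lambda>y. \<xi> u y - f y) \<noteq> {} \<and> fibre_norm u (\<lambda>y. \<xi> u y - f y) \<le> B"
      using E0_diff_Cc_fibre_norm_bounded[OF \<xi>E0 f(1)] by blast
    have "section_norm (\<lambda>u y. b u * \<xi> u y - b (r y) * f y) \<le> M * section_norm (\<lambda>u y. \<xi> u y - f y)"
    proof (rule E0_norm_le)
      fix u assume u: "u \<in> G0"
      have "fibre_norm u (\<lambda>y. b u * \<xi> u y - b (r y) * f y) \<le> M * fibre_norm u (\<lambda>y. \<xi> u y - f y)"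
        using u B bound \<open>0 < M\<close> by (intro fibre_norm_scaled_diff_le) auto
      also have "\<dots> \<le> M * section_norm (\<lambda>u y. \<xi> u y - f y)"
        using \<open>0 < M\<close> B u by (intro mult_left_mono fibre_norm_le_E0_norm[of _ B]) auto
      finally show "fibre_norm u (\<lambda>y. b u * \<xi> u y - b (r y) * f y) \<le> M * section_norm (\<lambda>u y. \<xi> u y - f y)" .
    qed
    also have "\<dots> < e" using close \<open>0 < M\<close> by (simp add: field_simps)
    finally show ?thesis
      using Cc_mult_comp_r[OF b f(1)] f(2) by (intro bexI[of _ "\<lambda>y. b (r y) * f y"] conjI) auto
  qed
  with E0_scale[OF \<xi>E0 b \<open>0 < M\<close> bound] show ?thesis by (simp add: E0P_def)
qed

end

section \<open>The \<open>C\<^sub>0(G\<^sup>0)\<close>-module structure\<close>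

lemma conv_check_scale_right:
  "conv_check gmul ginv lam g (\<lambda>u y. c u * f u y) x = c (gd gmul ginv x) * conv_check gmul ginv lam g f x"
  unfolding conv_check_def
  by (subst integral_mult_right_zero[symmetric]) (rule Bochner_Integration.integral_cong, auto)

lemma conv_check_scale_left:
  "conv_check gmul ginv lam (\<lambda>u y. c u * g u y) f x = c (gr gmul ginv x) * conv_check gmul ginv lam g f x"
  unfolding conv_check_def
  by (subst integral_mult_right_zero[symmetric]) (rule Bochner_Integration.integral_cong, auto)

context haar_groupoid
begin

lemma A_check_P_left_action:
  assumes \<Phi>: "N_function \<Phi>" and \<Psi>: "N_function (complementary \<Phi>)"
    and b: "b \<in> C0_on G0" and h: "h \<in> A_check_P gmul ginv lam \<Phi> P"
  shows "(\<lambda>x. b (d x) * h x) \<in> A_check_P gmul ginv lam \<Phi> P"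
proof -
  interpret \<Phi>: haar_groupoid_orlicz G2 gmul ginv lam \<Phi> by unfold_locales (rule \<Phi>)
  interpret \<Psi>: haar_groupoid_orlicz G2 gmul ginv lam "complementary \<Phi>" by unfold_locales (rule \<Psi>)
  obtain M where "0 < M" and bound: "\<And>u. u \<in> G0 \<Longrightarrow> norm (b u) \<le> M"
    using C0_on_bounded[OF b] by blast
  have "continuous_on G0 b" using b by (simp add: C0_on_def)
  from h obtain fs gs where "h \<in> Cc"
    and fs: "\<And>n. fs n \<in> E0P gmul ginv lam \<Phi> P"
    and gs: "\<And>n. gs n \<in> E0P gmul ginv lam (complementary \<Phi>) P"
    and summable: "summable (\<lambda>n. \<Phi>.section_norm (fs n) * \<Psi>.section_norm (gs n))"
    and sums: "\<And>x. (\<lambda>n. conv_check gmul ginv lam (gs n) (fs n) x) sums h x"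
    unfolding A_check_P_def by blast
  define bfs where "bfs n = (\<lambda>u y. b u * fs n u y)" for n
  have bfs: "bfs n \<in> E0P gmul ginv lam \<Phi> P" for n
    unfolding bfs_def by (rule \<Phi>.E0P_scale[OF fs \<open>continuous_on G0 b\<close> \<open>0 < M\<close> bound])
  have "summable (\<lambda>n. \<Phi>.section_norm (bfs n) * \<Psi>.section_norm (gs n))"
    using summable \<Phi>.E0P_norm_nonneg[OF bfs] _ \<Psi>.E0P_norm_nonneg[OF gs]
  proof (rule summable_dominated_products)
    show "\<Phi>.section_norm (bfs n) \<le> M * \<Phi>.section_norm (fs n)" for n
      unfolding bfs_def using \<open>0 < M\<close> bound by (intro \<Phi>.E0P_norm_scale_le[OF fs]) auto
  qed
  moreover have "(\<lambda>n. conv_check gmul ginv lam (gs n) (bfs n) x) sums (b (d x) * h x)" for x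
    unfolding bfs_def conv_check_scale_right by (rule sums_mult[OF sums])
  ultimately show ?thesis
    using Cc_mult_comp_d[OF \<open>continuous_on G0 b\<close> \<open>h \<in> Cc\<close>] bfs gs unfolding A_check_P_def
    by (intro CollectI conjI exI[of _ bfs] exI[of _ gs]) auto
qed

lemma A_check_P_right_action:
  assumes \<Phi>: "N_function \<Phi>" and \<Psi>: "N_function (complementary \<Phi>)"
    and b: "b \<in> C0_on G0" and h: "h \<in> A_check_P gmul ginv lam \<Phi> P"
  shows "(\<lambda>x. h x * b (r x)) \<in> A_check_P gmul ginv lam \<Phi> P"
proof -
  interpret \<Phi>: haar_groupoid_orlicz G2 gmul ginv lam \<Phi> by unfold_locales (rule \<Phi>)
  interpret \<Psi>: haar_groupoid_orlicz G2 gmul ginv lam "complementary \<Phi>" by unfold_locales (rule \<Psi>)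
  obtain M where "0 < M" and bound: "\<And>u. u \<in> G0 \<Longrightarrow> norm (b u) \<le> M"
    using C0_on_bounded[OF b] by blast
  have "continuous_on G0 b" using b by (simp add: C0_on_def)
  from h obtain fs gs where "h \<in> Cc"
    and fs: "\<And>n. fs n \<in> E0P gmul ginv lam \<Phi> P"
    and gs: "\<And>n. gs n \<in> E0P gmul ginv lam (complementary \<Phi>) P"
    and summable: "summable (\<lambda>n. \<Phi>.section_norm (fs n) * \<Psi>.section_norm (gs n))"
    and sums: "\<And>x. (\<lambda>n. conv_check gmul ginv lam (gs n) (fs n) x) sums h x"
    unfolding A_check_P_def by blast
  define bgs where "bgs n = (\<lambda>u y. b u * gs n u y)" for n
  have bgs: "bgs n \<in> E0P gmul ginv lam (complementary \<Phi>) P" for n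
    unfolding bgs_def by (rule \<Psi>.E0P_scale[OF gs \<open>continuous_on G0 b\<close> \<open>0 < M\<close> bound])
  have "summable (\<lambda>n. \<Psi>.section_norm (gs n) * \<Phi>.section_norm (fs n))"
    using summable by (simp add: mult.commute)
  then have "summable (\<lambda>n. \<Psi>.section_norm (bgs n) * \<Phi>.section_norm (fs n))"
    using \<Psi>.E0P_norm_nonneg[OF bgs] _ \<Phi>.E0P_norm_nonneg[OF fs]
  proof (rule summable_dominated_products)
    show "\<Psi>.section_norm (bgs n) \<le> M * \<Psi>.section_norm (gs n)" for n
      unfolding bgs_def using \<open>0 < M\<close> bound by (intro \<Psi>.E0P_norm_scale_le[OF gs]) auto
  qed
  moreover have "(\<lambda>n. conv_check gmul ginv lam (bgs n) (fs n) x) sums (h x * b (r x))" for x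
    unfolding bgs_def conv_check_scale_left mult.commute[of "h x"] by (rule sums_mult[OF sums])
  moreover have "(\<lambda>x. h x * b (r x)) \<in> Cc"
    using Cc_mult_comp_r(1)[OF \<open>continuous_on G0 b\<close> \<open>h \<in> Cc\<close>] by (simp add: mult.commute)
  ultimately show ?thesis
    using fs bgs unfolding A_check_P_def
    by (intro CollectI conjI exI[of _ fs] exI[of _ bgs]) (auto simp: mult.commute)
qed

end

theorem lemma4p2:
  fixes G2 :: "('g::{t2_space, second_countable_topology} \<times> 'g) set"
    and gmul :: "'g \<Rightarrow> 'g \<Rightarrow> 'g" and ginv :: "'g \<Rightarrow> 'g"
    and lam :: "'g \<Rightarrow> 'g measure"
    and \<Phi> \<Psi> :: "real \<Rightarrow> real"
  assumes "locally_compact_space (euclidean :: 'g topology)"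
    and "topological_groupoid G2 gmul ginv"
    and "left_haar_system gmul ginv lam"
    and "N_function \<Phi>" and "\<Psi> = complementary \<Phi>" and "N_function \<Psi>"
    and "delta2 (compact (UNIV :: 'g set)) \<Phi>" and "delta2 (compact (UNIV :: 'g set)) \<Psi>"
  shows "\<forall>b \<in> C0_on (unit_space gmul ginv). \<forall>h \<in> A_check gmul ginv lam \<Phi>.
           (\<lambda>x. b (gd gmul ginv x) * h x) \<in> A_check gmul ginv lam \<Phi> \<and>
           (\<lambda>x. h x * b (gr gmul ginv x)) \<in> A_check gmul ginv lam \<Phi>"
proof (intro ballI)
  fix b h assume b: "b \<in> C0_on (unit_space gmul ginv)" and "h \<in> A_check gmul ginv lam \<Phi>"
  then obtain P where P: "P \<in> K_sets gmul ginv" and h: "h \<in> A_check_P gmul ginv lam \<Phi> P"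
    by (auto simp: A_check_def)
  interpret haar_groupoid G2 gmul ginv lam using assms(2,3) by unfold_locales
  have "N_function (complementary \<Phi>)" using assms(5,6) by simp
  with A_check_P_left_action[OF assms(4) _ b h] A_check_P_right_action[OF assms(4) _ b h] P
  show "(\<lambda>x. b (gd gmul ginv x) * h x) \<in> A_check gmul ginv lam \<Phi> \<and>
        (\<lambda>x. h x * b (gr gmul ginv x)) \<in> A_check gmul ginv lam \<Phi>"
    by (auto simp: A_check_def)
qed

end
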